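(* Let $\mathcal H_1,\mathcal H_2$ be real Hilbert spaces and let $\mathcal M_{ij}:\mathcal H_j\to\mathcal H_i$ ($i,j=1,2$) be bounded linear operators with $\mathcal M_{ji}=\mathcal M_{ij}^*$. Consider the self-adjoint bounded operator $\mathcal M=\begin{pmatrix}\mathcal M_{11}&\mathcal M_{12}\\ \mathcal M_{21}&\mathcal M_{22}\end{pmatrix}$ on $\mathcal H_1\times\mathcal H_2$ (with inner product $\langle (x_1,y_1),(x_2,y_2)\rangle=\langle x_1,x_2\rangle+\langle y_1,y_2\rangle$). Suppose $\mathcal M_{11}\ge 0$ and $-\mathcal M_{22}\ge0$, i.e. $\langle \mathcal M_{11}x,x\rangle\ge0$ for all $x\in\mathcal H_1$ and $\langle\mathcal M_{22}y,y\rangle\le 0$ for all $y\in\mathcal H_2$. Then for every $\varepsilon>0$ the operator $$\mathcal M_\varepsilon=\begin{pmatrix}\mathcal M_{11}+\varepsilon I&\mathcal M_{12}\\ \mathcal M_{21}&\mathcal M_{22}-\varepsilon I\end{pmatrix}$$ is invertible (with bounded inverse), and $$\|\mathcal M_\varepsilon^{-1}\mathcal M\|\le 1\qquad\text{for all }\varepsilon>0.$$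
   Context: $\mathcal M_{ij}^*$ denotes the Hilbert-space adjoint; $I$ denotes the identity operator on the relevant space; $\|\cdot\|$ is the operator norm. *)

theory Defs
  imports "HOL-Analysis.Analysis"
begin

definition block_op ::
  "('a::plus \<Rightarrow> 'a) \<Rightarrow> ('b \<Rightarrow> 'a) \<Rightarrow> ('a \<Rightarrow> 'b) \<Rightarrow> ('b::plus \<Rightarrow> 'b) \<Rightarrow> ('a \<times> 'b \<Rightarrow> 'a \<times> 'b)"
  where "block_op A B C D = (\<lambda>(x, y). (A x + B y, C x + D y))"

end

theory Submission
  imports Defs
begin

text \<open>With \<open>J = diag(I, -I)\<close>, the hypotheses say that \<open>\<langle>M v, J v\<rangle> \<ge> 0\<close>, while
  \<open>M\<^sub>\<epsilon> = M + \<epsilon> J\<close>, so \<open>J M\<^sub>\<epsilon>\<close> is coercive with constant \<open>\<epsilon>\<close>. A coercive bounded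
  operator on a Hilbert space is invertible (for small \<open>\<rho>\<close> the map \<open>u \<mapsto> u - \<rho> (A u - f)\<close> is a
  contraction), hence so is \<open>M\<^sub>\<epsilon>\<close>. If \<open>M\<^sub>\<epsilon> w = M z\<close> then \<open>M (z - w) = \<epsilon> J w\<close>, and pairing with
  \<open>J (z - w)\<close> gives \<open>\<langle>w, z - w\<rangle> \<ge> 0\<close>, i.e. \<open>\<parallel>w\<parallel>\<^sup>2 \<le> \<langle>w, z\<rangle>\<close>, whence \<open>\<parallel>w\<parallel> \<le> \<parallel>z\<parallel>\<close>.\<close>

lemma bounded_linear_block_op:
  assumes "bounded_linear A" "bounded_linear B" "bounded_linear C" "bounded_linear D"
  shows "bounded_linear (block_op A B C D)"
proof -
  have "block_op A B C D = (\<lambda>z. (A (fst z) + B (snd z), C (fst z) + D (snd z)))"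
    by (auto simp: block_op_def fun_eq_iff split: prod.split)
  then show ?thesis
    by (simp add: bounded_linear_Pair bounded_linear_add bounded_linear_fst_comp
        bounded_linear_snd_comp bounded_linear_compose[OF assms(1)] bounded_linear_compose[OF assms(2)]
        bounded_linear_compose[OF assms(3)] bounded_linear_compose[OF assms(4)])
qed

lemma power2_norm_diff_scaleR:
  fixes v w :: "'a::real_inner"
  shows "(norm (w - r *\<^sub>R v))\<^sup>2 = (norm w)\<^sup>2 - 2 * r * inner v w + r\<^sup>2 * (norm v)\<^sup>2"
proof -
  have "(norm (w - r *\<^sub>R v))\<^sup>2 = inner w w - r * inner v w - r * inner w v + r * r * inner v v"
    by (simp add: power2_norm_eq_inner algebra_simps)
  then show ?thesis
    by (simp only: power2_norm_eq_inner inner_commute[of w v]) (simp add: algebra_simps power2_eq_square)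
qed

lemma coercive_lower_bound:
  fixes A :: "'a::real_inner \<Rightarrow> 'a"
  assumes "c * (norm v)\<^sup>2 \<le> inner (A v) v" "0 \<le> c"
  shows "c * norm v \<le> norm (A v)"
proof (cases "v = 0")
  case False
  have "c * norm v * norm v \<le> norm (A v) * norm v"
    using assms(1) norm_cauchy_schwarz[of "A v" v] by (simp add: power2_eq_square mult.assoc)
  then show ?thesis using False by simp
qed (use assms in simp)

lemma coercive_contraction:
  fixes A :: "'a::real_inner \<Rightarrow> 'a"
  assumes coercive: "c * (norm w)\<^sup>2 \<le> inner (A w) w"
    and bound: "norm (A w) \<le> K * norm w" and "0 < c" "c \<le> K"
  shows "norm (w - (c / K\<^sup>2) *\<^sub>R A w) \<le> sqrt (1 - c\<^sup>2 / K\<^sup>2) * norm w"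
proof -
  define \<rho> where "\<rho> = c / K\<^sup>2"
  have "0 < K" "0 \<le> \<rho>" using assms by (auto simp: \<rho>_def)
  have "(norm (w - \<rho> *\<^sub>R A w))\<^sup>2 = (norm w)\<^sup>2 - 2 * \<rho> * inner (A w) w + \<rho>\<^sup>2 * (norm (A w))\<^sup>2"
    by (rule power2_norm_diff_scaleR)
  also have "\<dots> \<le> (norm w)\<^sup>2 - 2 * \<rho> * (c * (norm w)\<^sup>2) + \<rho>\<^sup>2 * (K * norm w)\<^sup>2"
  proof -
    have "(norm (A w))\<^sup>2 \<le> (K * norm w)\<^sup>2" using bound by (simp add: power_mono)
    then have "\<rho>\<^sup>2 * (norm (A w))\<^sup>2 \<le> \<rho>\<^sup>2 * (K * norm w)\<^sup>2" by (simp add: mult_left_mono)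
    then show ?thesis using mult_left_mono[OF coercive \<open>0 \<le> \<rho>\<close>] by simp
  qed
  also have "\<dots> = (1 - c\<^sup>2 / K\<^sup>2) * (norm w)\<^sup>2"
    using \<open>0 < K\<close> by (simp add: \<rho>_def field_simps power2_eq_square)
  also have "\<dots> = (sqrt (1 - c\<^sup>2 / K\<^sup>2) * norm w)\<^sup>2"
    using assms by (simp add: power_mult_distrib power_divide power_mono)
  finally have "(norm (w - \<rho> *\<^sub>R A w))\<^sup>2 \<le> (sqrt (1 - c\<^sup>2 / K\<^sup>2) * norm w)\<^sup>2" .
  then show ?thesis
    unfolding \<rho>_def
    by (rule power2_le_imp_le) (use assms in \<open>simp add: power_divide power_mono\<close>)
qed

lemma coercive_surj:
  fixes A :: "'a::{real_inner, complete_space} \<Rightarrow> 'a"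
  assumes "bounded_linear A" and coercive: "\<And>v. c * (norm v)\<^sup>2 \<le> inner (A v) v" and "0 < c"
  shows "surj A"
proof -
  interpret A: bounded_linear A by fact
  obtain K0 where K0: "\<And>v. norm (A v) \<le> norm v * K0" using A.bounded by blast
  define K where "K = max K0 c"
  have bound: "norm (A v) \<le> K * norm v" for v
    using K0[of v] mult_left_mono[of K0 K "norm v"] by (simp add: K_def mult.commute)
  define \<rho> where "\<rho> = c / K\<^sup>2"
  define q where "q = sqrt (1 - c\<^sup>2 / K\<^sup>2)"
  have "c \<le> K" "0 < K" using \<open>0 < c\<close> by (auto simp: K_def)
  then have "c\<^sup>2 / K\<^sup>2 \<le> 1" "0 < c\<^sup>2 / K\<^sup>2" "\<rho> \<noteq> 0"
    using \<open>0 < c\<close> by (simp_all add: \<rho>_def power_mono)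
  then have "0 \<le> q" "q < 1" by (simp_all add: q_def)
  show ?thesis
  proof (rule surjI)
    fix f
    define T where "T u = u - \<rho> *\<^sub>R (A u - f)" for u
    have "dist (T x) (T y) \<le> q * dist x y" for x y
    proof -
      have "T x - T y = (x - y) - \<rho> *\<^sub>R A (x - y)"
        by (simp add: T_def A.diff algebra_simps)
      then show ?thesis
        using coercive_contraction[where A = A, OF coercive[of "x - y"] bound[of "x - y"] \<open>0 < c\<close> \<open>c \<le> K\<close>]
        by (simp add: dist_norm \<rho>_def q_def)
    qed
    then obtain u where "T u = u" using banach_fix_type[OF \<open>0 \<le> q\<close> \<open>q < 1\<close>] by blast
    with \<open>\<rho> \<noteq> 0\<close> have "A u = f" by (simp add: T_def)
    then show "A (inv A f) = f" by (metis f_inv_into_f rangeI)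
  qed
qed

lemma coercive_has_bounded_inverse:
  fixes A :: "'a::{real_inner, complete_space} \<Rightarrow> 'a"
  assumes "bounded_linear A" and coercive: "\<And>v. c * (norm v)\<^sup>2 \<le> inner (A v) v" and "0 < c"
  obtains N where "bounded_linear N" "\<And>z. N (A z) = z" "\<And>z. A (N z) = z"
proof
  interpret A: bounded_linear A by fact
  have lower: "c * norm v \<le> norm (A v)" for v
    using coercive_lower_bound[where A = A, OF coercive[of v]] \<open>0 < c\<close> by simp
  have "inj A"
  proof (rule injI)
    fix a b assume "A a = A b"
    then show "a = b" using lower[of "a - b"] \<open>0 < c\<close> by (simp add: A.diff mult_le_0_iff)
  qed
  show left: "inv A (A z) = z" for z using \<open>inj A\<close> by simp
  show right: "A (inv A z) = z" for z
    using coercive_surj[OF assms] by (simp add: surj_f_inv_f)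
  show "bounded_linear (inv A)"
  proof (rule bounded_linear_intro[where K = "1 / c"])
    show "inv A (x + y) = inv A x + inv A y" for x y by (metis A.add left right)
    show "inv A (r *\<^sub>R x) = r *\<^sub>R inv A x" for r x by (metis A.scale left right)
    show "norm (inv A x) \<le> norm x * (1 / c)" for x
      using lower[of "inv A x"] \<open>0 < c\<close> by (simp add: right field_simps)
  qed
qed

definition neg_snd :: "'a::real_vector \<times> 'b::real_vector \<Rightarrow> 'a \<times> 'b" where
  "neg_snd v = (fst v, - snd v)"

lemma neg_snd_neg_snd [simp]: "neg_snd (neg_snd v) = v"
  by (simp add: neg_snd_def)

lemma bounded_linear_neg_snd: "bounded_linear neg_snd"
  unfolding neg_snd_def
  by (intro bounded_linear_Pair bounded_linear_fst bounded_linear_minus bounded_linear_snd)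

lemma inner_neg_snd_left: "inner (neg_snd a) b = inner a (neg_snd (b::'a::real_inner \<times> 'b::real_inner))"
  by (cases a; cases b) (simp add: neg_snd_def)

lemma inner_neg_snd_neg_snd [simp]:
  "inner (neg_snd a) (neg_snd b) = inner a (b::'a::real_inner \<times> 'b::real_inner)"
  by (cases a; cases b) (simp add: neg_snd_def)

lemma block_op_shift_eq:
  "block_op (\<lambda>x. A x + \<epsilon> *\<^sub>R x) B C (\<lambda>y. D y - \<epsilon> *\<^sub>R y) v = block_op A B C D v + \<epsilon> *\<^sub>R neg_snd v"
  by (cases v) (simp add: block_op_def neg_snd_def algebra_simps)

lemma inner_block_op_neg_snd:
  assumes "linear B" and adjoint: "\<And>x y. inner (C x) y = inner x (B y)"
  shows "inner (block_op A B C D (x, y)) (neg_snd (x, y)) = inner (A x) x - inner (D y) y"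
  using adjoint[of x y] linear_neg[OF assms(1), of y]
  by (simp add: block_op_def neg_snd_def inner_add_left inner_add_right inner_commute)

lemma norm_le_if_flip_accretive:
  fixes M :: "'a::real_inner \<times> 'b::real_inner \<Rightarrow> 'a \<times> 'b"
  assumes "linear M" and accretive: "\<And>v. 0 \<le> inner (M v) (neg_snd v)"
    and "0 < \<epsilon>" and "M w + \<epsilon> *\<^sub>R neg_snd w = M z"
  shows "norm w \<le> norm z"
proof -
  have "M (z - w) = \<epsilon> *\<^sub>R neg_snd w"
    using assms(4) by (simp add: linear_diff[OF \<open>linear M\<close>] algebra_simps)
  then have "0 \<le> \<epsilon> * inner w (z - w)"
    using accretive[of "z - w"] by simp
  then have "(norm w)\<^sup>2 \<le> inner w z"
    using \<open>0 < \<epsilon>\<close> by (simp add: zero_le_mult_iff inner_diff_right power2_norm_eq_inner)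
  also have "\<dots> \<le> norm w * norm z" by (rule norm_cauchy_schwarz)
  finally show ?thesis
    by (metis mult_le_cancel_left norm_ge_zero not_le order_trans power2_eq_square)
qed

lemma flip_accretive_shift_has_bounded_inverse:
  fixes M :: "'a::{real_inner, complete_space} \<times> 'b::{real_inner, complete_space} \<Rightarrow> 'a \<times> 'b"
  assumes "bounded_linear M" and accretive: "\<And>v. 0 \<le> inner (M v) (neg_snd v)" and "0 < \<epsilon>"
  obtains R where "bounded_linear R" "\<And>v. R (M v + \<epsilon> *\<^sub>R neg_snd v) = v"
    "\<And>z. M (R z) + \<epsilon> *\<^sub>R neg_snd (R z) = z"
proof -
  define S where "S v = neg_snd (M v + \<epsilon> *\<^sub>R neg_snd v)" for v
  have "bounded_linear S"
    unfolding S_def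
    by (intro bounded_linear_compose[OF bounded_linear_neg_snd] bounded_linear_add assms(1)
        bounded_linear_compose[OF bounded_linear_scaleR_right bounded_linear_neg_snd])
  moreover have "\<epsilon> * (norm v)\<^sup>2 \<le> inner (S v) v" for v
    using accretive[of v] by (simp add: S_def inner_neg_snd_left inner_add_left power2_norm_eq_inner)
  ultimately obtain N where N: "bounded_linear N" "\<And>v. N (S v) = v" "\<And>z. S (N z) = z"
    using coercive_has_bounded_inverse \<open>0 < \<epsilon>\<close> by blast
  show ?thesis
  proof (rule that[of "\<lambda>z. N (neg_snd z)"])
    show "bounded_linear (\<lambda>z. N (neg_snd z))"
      by (rule bounded_linear_compose[OF N(1) bounded_linear_neg_snd])
    show "N (neg_snd (M v + \<epsilon> *\<^sub>R neg_snd v)) = v" for v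
      using N(2)[of v] by (simp add: S_def)
    show "M (N (neg_snd z)) + \<epsilon> *\<^sub>R neg_snd (N (neg_snd z)) = z" for z
      using arg_cong[OF N(3)[of "neg_snd z"], of neg_snd] by (simp add: S_def)
  qed
qed

theorem mainTheorem2:
  fixes M11 :: "'a::{real_inner, complete_space} \<Rightarrow> 'a"
    and M12 :: "'b::{real_inner, complete_space} \<Rightarrow> 'a"
    and M21 :: "'a \<Rightarrow> 'b"
    and M22 :: "'b \<Rightarrow> 'b"
  assumes bl11: "bounded_linear M11" and bl12: "bounded_linear M12"
    and bl21: "bounded_linear M21" and bl22: "bounded_linear M22"
    and adj11: "\<forall>x x'. inner (M11 x) x' = inner x (M11 x')"
    and adj22: "\<forall>y y'. inner (M22 y) y' = inner y (M22 y')"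
    and adj21: "\<forall>x y. inner (M21 x) y = inner x (M12 y)"
    and pos11: "\<forall>x. inner (M11 x) x \<ge> 0"
    and neg22: "\<forall>y. inner (M22 y) y \<le> 0"
  shows "\<forall>\<epsilon>>0. \<exists>N. bounded_linear N
      \<and> (\<forall>z. N (block_op (\<lambda>x. M11 x + \<epsilon> *\<^sub>R x) M12 M21 (\<lambda>y. M22 y - \<epsilon> *\<^sub>R y) z) = z)
      \<and> (\<forall>z. block_op (\<lambda>x. M11 x + \<epsilon> *\<^sub>R x) M12 M21 (\<lambda>y. M22 y - \<epsilon> *\<^sub>R y) (N z) = z)
      \<and> onorm (\<lambda>z. N (block_op M11 M12 M21 M22 z)) \<le> 1"
proof (intro allI impI)
  fix \<epsilon> :: real assume "0 < \<epsilon>"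
  define M where "M = block_op M11 M12 M21 M22"
  define M\<^sub>\<epsilon> where "M\<^sub>\<epsilon> = block_op (\<lambda>x. M11 x + \<epsilon> *\<^sub>R x) M12 M21 (\<lambda>y. M22 y - \<epsilon> *\<^sub>R y)"
  have "bounded_linear M" unfolding M_def using bl11 bl12 bl21 bl22 by (rule bounded_linear_block_op)
  have M\<^sub>\<epsilon>_eq: "M\<^sub>\<epsilon> v = M v + \<epsilon> *\<^sub>R neg_snd v" for v
    by (simp add: M\<^sub>\<epsilon>_def M_def block_op_shift_eq)
  have accretive: "0 \<le> inner (M v) (neg_snd v)" for v
    using pos11 neg22 inner_block_op_neg_snd[OF bounded_linear.linear[OF bl12], of M21 M11 M22]
      adj21 by (cases v) (simp add: M_def, meson order_trans)
  obtain R where R: "bounded_linear R" "\<And>v. R (M\<^sub>\<epsilon> v) = v" "\<And>z. M\<^sub>\<epsilon> (R z) = z"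
    using flip_accretive_shift_has_bounded_inverse[OF \<open>bounded_linear M\<close> accretive \<open>0 < \<epsilon>\<close>]
    unfolding M\<^sub>\<epsilon>_eq by blast
  have "norm (R (M z)) \<le> 1 * norm z" for z
    using norm_le_if_flip_accretive[OF bounded_linear.linear[OF \<open>bounded_linear M\<close>] accretive \<open>0 < \<epsilon>\<close>]
      R(3)[of "M z", unfolded M\<^sub>\<epsilon>_eq] by simp
  then have "onorm (\<lambda>z. R (M z)) \<le> 1" by (intro onorm_bound) simp_all
  with R show "\<exists>N. bounded_linear N \<and> (\<forall>z. N (M\<^sub>\<epsilon> z) = z) \<and> (\<forall>z. M\<^sub>\<epsilon> (N z) = z)
      \<and> onorm (\<lambda>z. N (M z)) \<le> 1"
    by blast
qed

end
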